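(* Let $f=f(x_1,\ldots,x_n)$ be a positive non-canalyzing Boolean function such that for every $i\in[n]$ both restrictions $f_{|x_i=0}$ and $f_{|x_i=1}$ are canalyzing. Then for each $i\in[n]$: (a) there is a maximal zero of $f$ having $0$'s in exactly two coordinates, one of which is $i$; (b) there is a minimal one of $f$ having $1$'s in exactly two coordinates, one of which is $i$.
   Context: $B=\{0,1\}$, $\preceq$ the coordinatewise order on $B^n$. $f$ is positive if $f(\mathbf{x})=1$ and $\mathbf{x}\preceq\mathbf{y}$ imply $f(\mathbf{y})=1$. Maximal zeros are $\preceq$-maximal false points, minimal ones are $\preceq$-minimal true points. $f_{|x_i=\alpha}$ is obtained by fixing $x_i=\alpha$. $f$ is canalyzing if for some $i$, $f_{|x_i=0}$ or $f_{|x_i=1}$ is constant. *)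

theory Defs
  imports Main
begin

text \<open>A Boolean function on the variable set V is modelled as f :: (nat \<Rightarrow> bool) \<Rightarrow> bool,
  evaluated only on points of B^V, i.e. assignments that are False outside V.\<close>

definition pts :: "nat set \<Rightarrow> (nat \<Rightarrow> bool) set" where
  "pts V = {x. \<forall>j. j \<notin> V \<longrightarrow> \<not> x j}"

definition leqB :: "(nat \<Rightarrow> bool) \<Rightarrow> (nat \<Rightarrow> bool) \<Rightarrow> bool" where
  "leqB x y = (\<forall>j. x j \<longrightarrow> y j)"

definition positive :: "nat set \<Rightarrow> ((nat \<Rightarrow> bool) \<Rightarrow> bool) \<Rightarrow> bool" where
  "positive V f = (\<forall>x\<in>pts V. \<forall>y\<in>pts V. f x \<and> leqB x y \<longrightarrow> f y)"

text \<open>Restriction f_{|x_i=a}: a function of the variables V - {i}.\<close>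
definition restr :: "((nat \<Rightarrow> bool) \<Rightarrow> bool) \<Rightarrow> nat \<Rightarrow> bool \<Rightarrow> (nat \<Rightarrow> bool) \<Rightarrow> bool" where
  "restr f i a = (\<lambda>x. f (x(i := a)))"

definition const_on :: "nat set \<Rightarrow> ((nat \<Rightarrow> bool) \<Rightarrow> bool) \<Rightarrow> bool" where
  "const_on V f = (\<exists>c. \<forall>x\<in>pts V. f x = c)"

definition canalyzing :: "nat set \<Rightarrow> ((nat \<Rightarrow> bool) \<Rightarrow> bool) \<Rightarrow> bool" where
  "canalyzing V f = (\<exists>i\<in>V. const_on (V - {i}) (restr f i False) \<or> const_on (V - {i}) (restr f i True))"

definition max_zero :: "nat set \<Rightarrow> ((nat \<Rightarrow> bool) \<Rightarrow> bool) \<Rightarrow> (nat \<Rightarrow> bool) \<Rightarrow> bool" where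
  "max_zero V f x = (x \<in> pts V \<and> \<not> f x \<and> (\<forall>y\<in>pts V. leqB x y \<and> y \<noteq> x \<longrightarrow> f y))"

definition min_one :: "nat set \<Rightarrow> ((nat \<Rightarrow> bool) \<Rightarrow> bool) \<Rightarrow> (nat \<Rightarrow> bool) \<Rightarrow> bool" where
  "min_one V f x = (x \<in> pts V \<and> f x \<and> (\<forall>y\<in>pts V. leqB y x \<and> y \<noteq> x \<longrightarrow> \<not> f y))"

end

theory Submission
  imports Defs
begin

text \<open>A positive function is constant iff it takes the same value at the bottom and at the top
  point, since every point lies between them. So non-canalyzing forces
  \<open>f(V - {i}) = 1\<close> and \<open>f({i}) = 0\<close> for every \<open>i\<close>. If the restriction \<open>f_{|x_i=0}\<close> is
  canalyzing in \<open>x_k\<close>, the canalyzing value of \<open>x_k\<close> cannot be \<open>1\<close> (the subfunction would have to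
  agree at \<open>{k}\<close> and \<open>V - {i}\<close>), so it is \<open>0\<close> and \<open>f(V - {i,k}) = f(\<emptyset>) = 0\<close>. This zero is maximal
  because raising \<open>x_i\<close> or \<open>x_k\<close> gives \<open>f(V - {k}) = f(V - {i}) = 1\<close>. Part (b) is dual.\<close>

definition point :: "nat set \<Rightarrow> nat \<Rightarrow> bool" where
  "point A = (\<lambda>j. j \<in> A)"

lemma point_apply [simp]: "point A j \<longleftrightarrow> j \<in> A"
  by (simp add: point_def)

lemma point_upd [simp]:
  "(point A)(k := True) = point (insert k A)"
  "(point A)(k := False) = point (A - {k})"
  by (auto simp: point_def fun_eq_iff)

lemma point_in_pts [simp]: "point A \<in> pts V \<longleftrightarrow> A \<subseteq> V"
  by (auto simp: pts_def)

lemma positive_mono: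
  "positive V f \<Longrightarrow> x \<in> pts V \<Longrightarrow> y \<in> pts V \<Longrightarrow> leqB x y \<Longrightarrow> f x \<Longrightarrow> f y"
  unfolding positive_def by blast

lemma positive_point_mono:
  "positive V f \<Longrightarrow> A \<subseteq> B \<Longrightarrow> B \<subseteq> V \<Longrightarrow> f (point A) \<Longrightarrow> f (point B)"
  using positive_mono[of V f "point A" "point B"] by (auto simp: leqB_def)

lemma positive_restr:
  assumes "positive V f" and "i \<in> V"
  shows "positive (V - {i}) (restr f i a)"
  unfolding positive_def restr_def
proof (intro ballI impI)
  fix x y assume "x \<in> pts (V - {i})" "y \<in> pts (V - {i})" "f (x(i := a)) \<and> leqB x y"
  then show "f (y(i := a))"
    using \<open>i \<in> V\<close> positive_mono[OF \<open>positive V f\<close>, of "x(i := a)" "y(i := a)"]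
    by (auto simp: pts_def leqB_def)
qed

lemma positive_const_on_iff:
  assumes "positive V f"
  shows "const_on V f \<longleftrightarrow> f (point {}) = f (point V)"
proof
  assume "const_on V f"
  then show "f (point {}) = f (point V)"
    unfolding const_on_def by (metis empty_subsetI order_refl point_in_pts)
next
  assume eq: "f (point {}) = f (point V)"
  have "f x = f (point {})" if "x \<in> pts V" for x
    using positive_mono[OF assms _ that, of "point {}"] positive_mono[OF assms that, of "point V"]
      that eq by (auto simp: leqB_def pts_def)
  then show "const_on V f"
    unfolding const_on_def by blast
qed

lemma restr_restr: "restr (restr f i a) k b x = f (x(k := b, i := a))"
  by (simp add: restr_def)

lemma not_canalyzing_positive:
  assumes pos: "positive V f" and nc: "\<not> canalyzing V f" and "i \<in> V"
  shows "f (point (V - {i}))" and "\<not> f (point {i})"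
proof -
  have "\<not> const_on (V - {i}) (restr f i a)" for a
    using nc \<open>i \<in> V\<close> unfolding canalyzing_def by (cases a) auto
  then have "f ((point {})(i := a)) \<noteq> f ((point (V - {i}))(i := a))" for a
    using positive_const_on_iff[OF positive_restr[OF pos \<open>i \<in> V\<close>], of a]
    unfolding restr_def by blast
  from this[of False] this[of True]
  have "f (point {}) \<noteq> f (point (V - {i}))" and "f (point {i}) \<noteq> f (point V)"
    using \<open>i \<in> V\<close> by (simp_all add: insert_absorb)
  moreover have "f (point {}) \<longrightarrow> f (point (V - {i}))" and "f (point {i}) \<longrightarrow> f (point V)"
    using positive_point_mono[OF pos, of "{}" "V - {i}"] positive_point_mono[OF pos, of "{i}" V]
      \<open>i \<in> V\<close> by auto
  ultimately show "f (point (V - {i}))" and "\<not> f (point {i})"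
    by blast+
qed

lemma canalyzing_restr_positive:
  assumes pos: "positive V f" and "i \<in> V" and "canalyzing (V - {i}) (restr f i a)"
  obtains k b where "k \<in> V - {i}"
    and "f ((point {})(k := b, i := a)) = f ((point (V - {i, k}))(k := b, i := a))"
proof -
  obtain k b where k: "k \<in> V - {i}" and const: "const_on (V - {i} - {k}) (restr (restr f i a) k b)"
    using assms(3) unfolding canalyzing_def by blast
  have "positive (V - {i} - {k}) (restr (restr f i a) k b)"
    by (rule positive_restr[OF positive_restr[OF pos \<open>i \<in> V\<close>] k])
  with const have "restr (restr f i a) k b (point {}) = restr (restr f i a) k b (point (V - {i} - {k}))"
    using positive_const_on_iff by blast
  moreover have "V - {i} - {k} = V - {i, k}"
    by blast
  ultimately show thesis
    by (intro that[OF k]) (simp only: restr_restr)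
qed

lemma canalyzing_restr_False_zero:
  assumes pos: "positive V f" and nc: "\<not> canalyzing V f" and "i \<in> V"
    and "canalyzing (V - {i}) (restr f i False)"
  obtains k where "k \<in> V - {i}" and "\<not> f (point (V - {i, k}))"
proof -
  obtain k b where k: "k \<in> V - {i}"
    and eq: "f ((point {})(k := b, i := False)) = f ((point (V - {i, k}))(k := b, i := False))"
    using canalyzing_restr_positive[OF pos \<open>i \<in> V\<close> assms(4)] by blast
  have "\<not> b"
  proof
    assume b
    have "insert k (V - {i, k}) - {i} = V - {i}" and "insert k {} - {i} = {k}"
      using k by auto
    with eq \<open>b\<close> have "f (point {k}) = f (point (V - {i}))"
      by simp
    then show False
      using not_canalyzing_positive(1)[OF pos nc \<open>i \<in> V\<close>]
        not_canalyzing_positive(2)[OF pos nc, of k] k by simp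
  qed
  moreover have "V - {i, k} - {k} - {i} = V - {i, k}"
    by blast
  ultimately have "f (point {}) = f (point (V - {i, k}))"
    using eq by simp
  moreover have "\<not> f (point {})"
    using positive_point_mono[OF pos, of "{}" "{i}"] not_canalyzing_positive(2)[OF pos nc \<open>i \<in> V\<close>]
      \<open>i \<in> V\<close> by blast
  ultimately show thesis
    using that[OF k] by simp
qed

lemma canalyzing_restr_True_one:
  assumes pos: "positive V f" and nc: "\<not> canalyzing V f" and "i \<in> V"
    and "canalyzing (V - {i}) (restr f i True)"
  obtains k where "k \<in> V - {i}" and "f (point {i, k})"
proof -
  obtain k b where k: "k \<in> V - {i}"
    and eq: "f ((point {})(k := b, i := True)) = f ((point (V - {i, k}))(k := b, i := True))"
    using canalyzing_restr_positive[OF pos \<open>i \<in> V\<close> assms(4)] by blast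
  have b
  proof (rule ccontr)
    assume "\<not> b"
    have "insert i (V - {i, k} - {k}) = V - {k}"
      using \<open>i \<in> V\<close> k by auto
    with eq \<open>\<not> b\<close> have "f (point {i}) = f (point (V - {k}))"
      by simp
    then show False
      using not_canalyzing_positive(1)[OF pos nc, of k]
        not_canalyzing_positive(2)[OF pos nc \<open>i \<in> V\<close>] k by simp
  qed
  have "insert i (insert k (V - {i, k})) = V" and "insert i {k} = {i, k}"
    using \<open>i \<in> V\<close> k by auto
  with eq \<open>b\<close> have "f (point {i, k}) = f (point V)"
    by simp
  then show thesis
    using that[OF k] not_canalyzing_positive(1)[OF pos nc \<open>i \<in> V\<close>]
      positive_point_mono[OF pos, of "V - {i}" V] by auto
qed

lemma max_zeroI:
  assumes pos: "positive V f" and x: "x \<in> pts V" and "\<not> f x"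
    and up: "\<And>j. j \<in> V \<Longrightarrow> \<not> x j \<Longrightarrow> f (x(j := True))"
  shows "max_zero V f x"
  unfolding max_zero_def
proof (intro conjI ballI impI x \<open>\<not> f x\<close>)
  fix y assume y: "y \<in> pts V" and "leqB x y \<and> y \<noteq> x"
  then obtain j where "y j" "\<not> x j" and xy: "leqB x y"
    by (auto simp: leqB_def fun_eq_iff)
  moreover from \<open>y j\<close> y have "j \<in> V"
    by (auto simp: pts_def)
  ultimately show "f y"
    using positive_mono[OF pos _ y _ up] x by (auto simp: pts_def leqB_def)
qed

lemma min_oneI:
  assumes pos: "positive V f" and x: "x \<in> pts V" and "f x"
    and down: "\<And>j. x j \<Longrightarrow> \<not> f (x(j := False))"
  shows "min_one V f x"
  unfolding min_one_def
proof (intro conjI ballI impI x \<open>f x\<close>)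
  fix y assume y: "y \<in> pts V" and "leqB y x \<and> y \<noteq> x"
  then obtain j where "x j" "\<not> y j" and yx: "leqB y x"
    by (auto simp: leqB_def fun_eq_iff)
  then show "\<not> f y"
    using positive_mono[OF pos y _ _ _] down[of j] x by (auto simp: pts_def leqB_def)
qed

lemma max_zero_with_two_zeros:
  assumes pos: "positive V f" and nc: "\<not> canalyzing V f" and i: "i \<in> V"
    and "canalyzing (V - {i}) (restr f i False)"
  obtains k where "k \<in> V - {i}" and "max_zero V f (point (V - {i, k}))"
proof -
  obtain k where k: "k \<in> V - {i}" and zero: "\<not> f (point (V - {i, k}))"
    using canalyzing_restr_False_zero[OF pos nc i assms(4)] by blast
  have "max_zero V f (point (V - {i, k}))"
  proof (rule max_zeroI[OF pos _ zero])
    fix j assume "j \<in> V" and "\<not> point (V - {i, k}) j"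
    then have "j = i \<or> j = k"
      by simp
    moreover have "(point (V - {i, k}))(i := True) = point (V - {k})"
      and "(point (V - {i, k}))(k := True) = point (V - {i})"
      using i k by (auto simp: point_def fun_eq_iff)
    ultimately show "f ((point (V - {i, k}))(j := True))"
      using not_canalyzing_positive(1)[OF pos nc] i k by auto
  qed (simp add: pts_def)
  with k show thesis ..
qed

lemma min_one_with_two_ones:
  assumes pos: "positive V f" and nc: "\<not> canalyzing V f" and i: "i \<in> V"
    and "canalyzing (V - {i}) (restr f i True)"
  obtains k where "k \<in> V - {i}" and "min_one V f (point {i, k})"
proof -
  obtain k where k: "k \<in> V - {i}" and one: "f (point {i, k})"
    using canalyzing_restr_True_one[OF pos nc i assms(4)] by blast
  have "min_one V f (point {i, k})"
  proof (rule min_oneI[OF pos _ one])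
    fix j assume "point {i, k} j"
    then have "j = i \<or> j = k"
      by simp
    moreover have "(point {i, k})(i := False) = point {k}" and "(point {i, k})(k := False) = point {i}"
      using k by (auto simp: point_def fun_eq_iff)
    ultimately show "\<not> f ((point {i, k})(j := False))"
      using not_canalyzing_positive(2)[OF pos nc] i k by auto
  qed (use i k in \<open>auto simp: pts_def\<close>)
  with k show thesis ..
qed

theorem mainTheorem5:
  fixes n :: nat and f :: "(nat \<Rightarrow> bool) \<Rightarrow> bool"
  assumes "positive {0..<n} f"
    and "\<not> canalyzing {0..<n} f"
    and "\<forall>i<n. canalyzing ({0..<n} - {i}) (restr f i False)
                \<and> canalyzing ({0..<n} - {i}) (restr f i True)"
  shows "\<forall>i<n.
     (\<exists>x j. max_zero {0..<n} f x \<and> j < n \<and> j \<noteq> i \<and> {k. k < n \<and> \<not> x k} = {i, j})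
   \<and> (\<exists>x j. min_one {0..<n} f x \<and> j < n \<and> j \<noteq> i \<and> {k. k < n \<and> x k} = {i, j})"
proof (intro allI impI conjI)
  fix i assume "i < n"
  then have i: "i \<in> {0..<n}"
    by simp
  obtain k where k: "k \<in> {0..<n} - {i}" and "max_zero {0..<n} f (point ({0..<n} - {i, k}))"
    using max_zero_with_two_zeros[OF assms(1,2) i] assms(3) \<open>i < n\<close> by blast
  moreover have "{j. j < n \<and> \<not> point ({0..<n} - {i, k}) j} = {i, k}" and "k < n" "k \<noteq> i"
    using i k by auto
  ultimately show "\<exists>x j. max_zero {0..<n} f x \<and> j < n \<and> j \<noteq> i \<and> {k. k < n \<and> \<not> x k} = {i, j}"
    by blast
  obtain k where k: "k \<in> {0..<n} - {i}" and "min_one {0..<n} f (point {i, k})"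
    using min_one_with_two_ones[OF assms(1,2) i] assms(3) \<open>i < n\<close> by blast
  moreover have "{j. j < n \<and> point {i, k} j} = {i, k}" and "k < n" "k \<noteq> i"
    using i k by auto
  ultimately show "\<exists>x j. min_one {0..<n} f x \<and> j < n \<and> j \<noteq> i \<and> {k. k < n \<and> x k} = {i, j}"
    by blast
qed

end
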